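(* Let $\star$ be a $t$-definer, let $n\ge 1$ and let $(X_1,d_1^\star),\dots,(X_n,d_n^\star)$ be nonempty $\star$-metric spaces, and let $X=\prod_{i=1}^n X_i$. For $x=(x_i)_{i=1}^n$, $y=(y_i)_{i=1}^n\in X$ define $d_T^\star(x,y)=d_1^\star(x_1,y_1)\star d_2^\star(x_2,y_2)\star\cdots\star d_n^\star(x_n,y_n)$ and $d_{\max}^\star(x,y)=\max_{1\le i\le n}d_i^\star(x_i,y_i)$. Then: (1) $(X,d_T^\star)$ is totally bounded if and only if every $(X_i,d_i^\star)$ is totally bounded; (2) $(X,d_{\max}^\star)$ is totally bounded if and only if every $(X_i,d_i^\star)$ is totally bounded.
   Context: A $t$-definer is a function $\star:[0,\infty)\times[0,\infty)\to[0,\infty)$ such that for all $a,b,c\ge 0$: $a\star b=b\star a$; $a\star(b\star c)=(a\star b)\star c$; if $a\le b$ then $a\star c\le b\star c$; $a\star 0=a$; and $\star$ is continuous in its first variable with respect to the Euclidean topology. Given a nonempty set $Y$, a $\star$-metric on $Y$ is a function $\rho:Y\times Y\to[0,\infty)$ such that for all $x,y,z\in Y$: $\rho(x,y)=0$ iff $x=y$; $\rho(x,y)=\rho(y,x)$; and $\rho(x,y)\le \rho(x,z)\star \rho(z,y)$; $(Y,\rho)$ is a $\star$-metric space. Both $d_T^\star$ and $d_{\max}^\star$ are $\star$-metrics on $X$ (with the same $t$-definer $\star$). A $\star$-metric space $(Y,\rho)$ is totally bounded if for every $\epsilon>0$ there is a finite set $F\subseteq Y$ with $Y=\bigcup_{x\in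 F}\{y\in Y:\rho(x,y)<\epsilon\}$. *)

theory Defs
  imports "HOL-Analysis.Analysis"
begin

text \<open>A t-definer: a binary operation on [0,\<infinity>), represented as a real function
  whose behaviour is only constrained on nonnegative arguments.\<close>
definition t_definer :: "(real \<Rightarrow> real \<Rightarrow> real) \<Rightarrow> bool" where
  "t_definer star \<longleftrightarrow>
     (\<forall>a\<ge>0. \<forall>b\<ge>0. star a b \<ge> 0) \<and>
     (\<forall>a\<ge>0. \<forall>b\<ge>0. star a b = star b a) \<and>
     (\<forall>a\<ge>0. \<forall>b\<ge>0. \<forall>c\<ge>0. star a (star b c) = star (star a b) c) \<and>
     (\<forall>a\<ge>0. \<forall>b\<ge>0. \<forall>c\<ge>0. a \<le> b \<longrightarrow> star a c \<le> star b c) \<and>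
     (\<forall>a\<ge>0. star a 0 = a) \<and>
     (\<forall>b\<ge>0. continuous_on {0..} (\<lambda>a. star a b))"

definition star_metric :: "(real \<Rightarrow> real \<Rightarrow> real) \<Rightarrow> 'a set \<Rightarrow> ('a \<Rightarrow> 'a \<Rightarrow> real) \<Rightarrow> bool" where
  "star_metric star Y \<rho> \<longleftrightarrow>
     (\<forall>x\<in>Y. \<forall>y\<in>Y. \<rho> x y \<ge> 0) \<and>
     (\<forall>x\<in>Y. \<forall>y\<in>Y. \<rho> x y = 0 \<longleftrightarrow> x = y) \<and>
     (\<forall>x\<in>Y. \<forall>y\<in>Y. \<rho> x y = \<rho> y x) \<and>
     (\<forall>x\<in>Y. \<forall>y\<in>Y. \<forall>z\<in>Y. \<rho> x y \<le> star (\<rho> x z) (\<rho> z y))"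

definition star_totally_bounded :: "'a set \<Rightarrow> ('a \<Rightarrow> 'a \<Rightarrow> real) \<Rightarrow> bool" where
  "star_totally_bounded Y \<rho> \<longleftrightarrow>
     (\<forall>\<epsilon>>0. \<exists>F. finite F \<and> F \<subseteq> Y \<and> Y = (\<Union>x\<in>F. {y\<in>Y. \<rho> x y < \<epsilon>}))"

fun star_iter :: "(real \<Rightarrow> real \<Rightarrow> real) \<Rightarrow> (nat \<Rightarrow> real) \<Rightarrow> nat \<Rightarrow> real" where
  "star_iter star a 0 = 0"
| "star_iter star a (Suc 0) = a 1"
| "star_iter star a (Suc (Suc k)) = star (star_iter star a (Suc k)) (a (Suc (Suc k)))"

definition dT :: "(real \<Rightarrow> real \<Rightarrow> real) \<Rightarrow> nat \<Rightarrow> (nat \<Rightarrow> 'a \<Rightarrow> 'a \<Rightarrow> real)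
                   \<Rightarrow> (nat \<Rightarrow> 'a) \<Rightarrow> (nat \<Rightarrow> 'a) \<Rightarrow> real" where
  "dT star n d x y = star_iter star (\<lambda>i. d i (x i) (y i)) n"

definition dmax :: "nat \<Rightarrow> (nat \<Rightarrow> 'a \<Rightarrow> 'a \<Rightarrow> real) \<Rightarrow> (nat \<Rightarrow> 'a) \<Rightarrow> (nat \<Rightarrow> 'a) \<Rightarrow> real" where
  "dmax n d x y = Max ((\<lambda>i. d i (x i) (y i)) ` {1..n})"

end

theory Submission
  imports Defs
begin

text \<open>Both \<open>d\<^sub>T\<^sup>\<star>\<close> and \<open>d\<^sub>m\<^sub>a\<^sub>x\<^sup>\<star>\<close> dominate every coordinate distance
  (for \<open>d\<^sub>T\<^sup>\<star>\<close> because \<open>a = a \<star> 0 \<le> a \<star> b\<close>), so a finite \<open>\<epsilon>\<close>-net of the product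
  projects to a finite \<open>\<epsilon>\<close>-net of each factor; here the factors must be nonempty. Conversely,
  both are uniformly small as soon as all coordinate distances are: for \<open>d\<^sub>T\<^sup>\<star>\<close> this
  follows by induction on \<open>n\<close> from the continuity of \<open>a \<mapsto> a \<star> b\<close> at \<open>0\<close>, where
  \<open>0 \<star> b = b\<close>. Hence the product of finite \<open>\<delta>\<close>-nets of the factors is a finite
  \<open>\<epsilon>\<close>-net of the product.\<close>

lemma star_totally_bounded_iff:
  "star_totally_bounded Y \<rho> \<longleftrightarrow>
     (\<forall>\<epsilon>>0. \<exists>F. finite F \<and> F \<subseteq> Y \<and> (\<forall>y\<in>Y. \<exists>x\<in>F. \<rho> x y < \<epsilon>))"
  unfolding star_totally_bounded_def by (intro all_cong ex_cong1) blast

lemma star_totally_boundedI: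
  "(\<And>\<epsilon>. \<epsilon> > 0 \<Longrightarrow> \<exists>F. finite F \<and> F \<subseteq> Y \<and> (\<forall>y\<in>Y. \<exists>x\<in>F. \<rho> x y < \<epsilon>))
    \<Longrightarrow> star_totally_bounded Y \<rho>"
  unfolding star_totally_bounded_iff by blast

lemma star_totally_boundedD:
  "star_totally_bounded Y \<rho> \<Longrightarrow> \<epsilon> > 0 \<Longrightarrow>
    \<exists>F. finite F \<and> F \<subseteq> Y \<and> (\<forall>y\<in>Y. \<exists>x\<in>F. \<rho> x y < \<epsilon>)"
  unfolding star_totally_bounded_iff by blast

lemma star_totally_bounded_projection:
  assumes tb: "star_totally_bounded (PiE I X) M"
    and nonempty: "\<And>j. j \<in> I \<Longrightarrow> X j \<noteq> {}"
    and i: "i \<in> I"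
    and dominates: "\<And>x y. x \<in> PiE I X \<Longrightarrow> y \<in> PiE I X \<Longrightarrow> d (x i) (y i) \<le> M x y"
  shows "star_totally_bounded (X i) d"
proof (rule star_totally_boundedI)
  fix \<epsilon> :: real
  assume "\<epsilon> > 0"
  then obtain F where F: "finite F" "F \<subseteq> PiE I X" and net: "\<forall>y\<in>PiE I X. \<exists>x\<in>F. M x y < \<epsilon>"
    using star_totally_boundedD[OF tb \<open>\<epsilon> > 0\<close>] by auto
  have proj: "(\<lambda>f. f i) ` PiE I X = X i"
    using nonempty i by (simp add: image_projection_PiE PiE_eq_empty_iff)
  have "\<forall>z\<in>X i. \<exists>w\<in>(\<lambda>f. f i) ` F. d w z < \<epsilon>"
  proof
    fix z
    assume "z \<in> X i"
    then obtain y where y: "y \<in> PiE I X" "y i = z"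
      using proj by force
    then obtain x where x: "x \<in> F" "M x y < \<epsilon>"
      using net by blast
    have "d (x i) z \<le> M x y"
      using dominates[of x y] x(1) F(2) y by blast
    with x show "\<exists>w\<in>(\<lambda>f. f i) ` F. d w z < \<epsilon>"
      by (intro bexI[of _ "x i"]) auto
  qed
  moreover have "(\<lambda>f. f i) ` F \<subseteq> X i"
    using F(2) proj by blast
  ultimately show "\<exists>G. finite G \<and> G \<subseteq> X i \<and> (\<forall>z\<in>X i. \<exists>w\<in>G. d w z < \<epsilon>)"
    using F(1) by blast
qed

lemma star_totally_bounded_PiE:
  assumes "finite I"
    and tb: "\<And>i. i \<in> I \<Longrightarrow> star_totally_bounded (X i) (d i)"
    and controlled: "\<And>\<epsilon>. \<epsilon> > 0 \<Longrightarrow> \<exists>\<delta>>0. \<forall>x\<in>PiE I X. \<forall>y\<in>PiE I X.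
                       (\<forall>i\<in>I. d i (x i) (y i) < \<delta>) \<longrightarrow> M x y < \<epsilon>"
  shows "star_totally_bounded (PiE I X) M"
proof (rule star_totally_boundedI)
  fix \<epsilon> :: real
  assume "\<epsilon> > 0"
  then obtain \<delta> where "\<delta> > 0" and \<delta>: "\<forall>x\<in>PiE I X. \<forall>y\<in>PiE I X.
      (\<forall>i\<in>I. d i (x i) (y i) < \<delta>) \<longrightarrow> M x y < \<epsilon>"
    using controlled by blast
  have "\<forall>i\<in>I. \<exists>G. finite G \<and> G \<subseteq> X i \<and> (\<forall>z\<in>X i. \<exists>w\<in>G. d i w z < \<delta>)"
    using star_totally_boundedD[OF tb \<open>\<delta> > 0\<close>] by auto
  then obtain G where G: "\<forall>i\<in>I. finite (G i) \<and> G i \<subseteq> X i \<and> (\<forall>z\<in>X i. \<exists>w\<in>G i. d i w z < \<delta>)"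
    by (rule bchoice[elim_format]) auto
  have "\<exists>x\<in>PiE I G. M x y < \<epsilon>" if y: "y \<in> PiE I X" for y
  proof -
    have "\<forall>i\<in>I. \<exists>w. w \<in> G i \<and> d i w (y i) < \<delta>"
      using G PiE_mem[OF y] by fastforce
    then obtain w where w: "\<forall>i\<in>I. w i \<in> G i \<and> d i (w i) (y i) < \<delta>"
      by (rule bchoice[elim_format]) auto
    let ?x = "restrict w I"
    have x: "?x \<in> PiE I G" "?x \<in> PiE I X"
      using w G by auto
    with \<delta> y w have "M ?x y < \<epsilon>"
      by simp
    with x(1) show ?thesis
      by blast
  qed
  moreover have "finite (PiE I G)"
    using G \<open>finite I\<close> by (simp add: finite_PiE)
  moreover have "PiE I G \<subseteq> PiE I X"
    using G by (intro PiE_mono) auto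
  ultimately show "\<exists>F. finite F \<and> F \<subseteq> PiE I X \<and> (\<forall>y\<in>PiE I X. \<exists>x\<in>F. M x y < \<epsilon>)"
    by auto
qed

lemma star_totally_bounded_PiE_iff:
  assumes "finite I"
    and "\<And>i. i \<in> I \<Longrightarrow> X i \<noteq> {}"
    and "\<And>x y i. x \<in> PiE I X \<Longrightarrow> y \<in> PiE I X \<Longrightarrow> i \<in> I \<Longrightarrow> d i (x i) (y i) \<le> M x y"
    and "\<And>\<epsilon>. \<epsilon> > 0 \<Longrightarrow> \<exists>\<delta>>0. \<forall>x\<in>PiE I X. \<forall>y\<in>PiE I X.
           (\<forall>i\<in>I. d i (x i) (y i) < \<delta>) \<longrightarrow> M x y < \<epsilon>"
  shows "star_totally_bounded (PiE I X) M \<longleftrightarrow> (\<forall>i\<in>I. star_totally_bounded (X i) (d i))"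
proof
  show "\<forall>i\<in>I. star_totally_bounded (X i) (d i)" if "star_totally_bounded (PiE I X) M"
    using star_totally_bounded_projection[OF that] assms(2,3) by auto
  show "star_totally_bounded (PiE I X) M" if "\<forall>i\<in>I. star_totally_bounded (X i) (d i)"
    using star_totally_bounded_PiE[OF assms(1) _ assms(4)] that by auto
qed

lemma star_metric_nonneg:
  "star_metric star Y \<rho> \<Longrightarrow> x \<in> Y \<Longrightarrow> y \<in> Y \<Longrightarrow> \<rho> x y \<ge> 0"
  unfolding star_metric_def by simp

context
  fixes star :: "real \<Rightarrow> real \<Rightarrow> real"
  assumes definer: "t_definer star"
begin

lemma star_nonneg: "a \<ge> 0 \<Longrightarrow> b \<ge> 0 \<Longrightarrow> star a b \<ge> 0"
  using definer unfolding t_definer_def by simp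

lemma star_commute: "a \<ge> 0 \<Longrightarrow> b \<ge> 0 \<Longrightarrow> star a b = star b a"
  using definer unfolding t_definer_def by simp

lemma star_mono_left: "a \<ge> 0 \<Longrightarrow> a \<le> b \<Longrightarrow> c \<ge> 0 \<Longrightarrow> star a c \<le> star b c"
  using definer unfolding t_definer_def by simp

lemma star_zero_right: "a \<ge> 0 \<Longrightarrow> star a 0 = a"
  using definer unfolding t_definer_def by metis

lemma continuous_on_star_left: "b \<ge> 0 \<Longrightarrow> continuous_on {0..} (\<lambda>a. star a b)"
  using definer unfolding t_definer_def by simp

lemma star_mono_right: "a \<ge> 0 \<Longrightarrow> b \<ge> 0 \<Longrightarrow> b \<le> c \<Longrightarrow> star a b \<le> star a c"
  using star_mono_left[of b c a] star_commute[of a b] star_commute[of a c] by simp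

lemma star_ge_left: "a \<ge> 0 \<Longrightarrow> b \<ge> 0 \<Longrightarrow> a \<le> star a b"
  using star_mono_right[of a 0 b] star_zero_right[of a] by simp

lemma star_ge_right: "a \<ge> 0 \<Longrightarrow> b \<ge> 0 \<Longrightarrow> b \<le> star a b"
  using star_ge_left[of b a] star_commute[of a b] by simp

lemma star_iter_nonneg:
  "(\<And>j. j \<in> {1..k} \<Longrightarrow> a j \<ge> 0) \<Longrightarrow> star_iter star a k \<ge> 0"
proof (induction k rule: induct_nat_012)
  case (ge2 k)
  have "star_iter star a (Suc k) \<ge> 0"
    by (rule ge2.IH(2)) (simp add: ge2.prems)
  moreover have "a (Suc (Suc k)) \<ge> 0"
    by (simp add: ge2.prems)
  ultimately show ?case
    by (simp add: star_nonneg)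
qed simp_all

lemma star_iter_ge:
  assumes "\<And>j. j \<in> {1..k} \<Longrightarrow> a j \<ge> 0" and "i \<in> {1..k}"
  shows "a i \<le> star_iter star a k"
  using assms
proof (induction k rule: induct_nat_012)
  case (ge2 k)
  let ?s = "star_iter star a (Suc k)"
  have "?s \<ge> 0"
    by (rule star_iter_nonneg) (simp add: ge2.prems(1))
  moreover have "a (Suc (Suc k)) \<ge> 0"
    by (simp add: ge2.prems(1))
  moreover have "i = Suc (Suc k) \<or> a i \<le> ?s"
    using ge2.IH(2) ge2.prems by (cases "i = Suc (Suc k)") auto
  ultimately show ?case
    using star_ge_left[of ?s "a (Suc (Suc k))"] star_ge_right[of ?s "a (Suc (Suc k))"] by auto
qed auto

lemma star_iter_small:
  assumes "\<epsilon> > 0"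
  shows "\<exists>\<delta>>0. \<forall>a. (\<forall>j\<in>{1..k}. 0 \<le> a j \<and> a j < \<delta>) \<longrightarrow> star_iter star a k < \<epsilon>"
  using assms
proof (induction k arbitrary: \<epsilon> rule: induct_nat_012)
  case 0
  then show ?case by auto
next
  case 1
  then show ?case by auto
next
  case (ge2 k)
  \<comment> \<open>Since \<open>0 \<star> h = h < \<epsilon>\<close>, continuity gives \<open>s \<star> h < \<epsilon>\<close> for small \<open>s\<close>;
    the last factor, being below \<open>h\<close>, is absorbed by monotonicity.\<close>
  define h where "h = \<epsilon> / 2"
  have h: "0 < h" "h < \<epsilon>"
    using ge2.prems by (simp_all add: h_def)
  have "star 0 h = h"
    using star_commute[of 0 h] star_zero_right[of h] h by simp
  moreover have "continuous_on {0..} (\<lambda>s. star s h)"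
    using continuous_on_star_left h by simp
  ultimately obtain \<gamma> where "\<gamma> > 0" and \<gamma>: "\<forall>s\<in>{0..}. dist s 0 < \<gamma> \<longrightarrow> dist (star s h) h < \<epsilon> - h"
    using h unfolding continuous_on_iff by (metis atLeast_iff diff_gt_0_iff_gt order_refl)
  obtain \<delta> where "\<delta> > 0"
    and \<delta>: "\<forall>a. (\<forall>j\<in>{1..Suc k}. 0 \<le> a j \<and> a j < \<delta>) \<longrightarrow> star_iter star a (Suc k) < \<gamma>"
    using ge2.IH(2)[OF \<open>\<gamma> > 0\<close>] by blast
  show ?case
  proof (intro exI[of _ "min \<delta> h"] conjI allI impI)
    fix a
    assume a: "\<forall>j\<in>{1..Suc (Suc k)}. 0 \<le> a j \<and> a j < min \<delta> h"
    let ?s = "star_iter star a (Suc k)"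
    have "?s \<ge> 0"
      using a by (intro star_iter_nonneg) auto
    moreover have "?s < \<gamma>"
      using \<delta> a by auto
    ultimately have "star ?s h < \<epsilon>"
      using \<gamma> by (auto simp: dist_real_def)
    moreover have "star ?s (a (Suc (Suc k))) \<le> star ?s h"
      using a[rule_format, of "Suc (Suc k)"] \<open>?s \<ge> 0\<close> by (intro star_mono_right) auto
    ultimately show "star_iter star a (Suc (Suc k)) < \<epsilon>"
      by simp
  qed (use \<open>\<delta> > 0\<close> h in simp)
qed

lemma dT_ge_component:
  assumes "\<And>j. j \<in> {1..n} \<Longrightarrow> d j (x j) (y j) \<ge> 0" and "i \<in> {1..n}"
  shows "d i (x i) (y i) \<le> dT star n d x y"
  unfolding dT_def using assms by (rule star_iter_ge)

lemma dT_small: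
  assumes "\<epsilon> > 0"
  obtains \<delta> where "\<delta> > 0"
    and "\<And>x y. \<forall>i\<in>{1..n}. 0 \<le> d i (x i) (y i) \<and> d i (x i) (y i) < \<delta> \<Longrightarrow> dT star n d x y < \<epsilon>"
proof -
  obtain \<delta> where "\<delta> > 0"
    and \<delta>: "\<forall>a. (\<forall>j\<in>{1..n}. 0 \<le> a j \<and> a j < \<delta>) \<longrightarrow> star_iter star a n < \<epsilon>"
    using star_iter_small[OF assms] by blast
  then show thesis
    using that unfolding dT_def by simp
qed

end

lemma dmax_ge_component: "i \<in> {1..n} \<Longrightarrow> d i (x i) (y i) \<le> dmax n d x y"
  unfolding dmax_def by (intro Max_ge) auto

lemma dmax_less: "n \<ge> 1 \<Longrightarrow> (\<forall>i\<in>{1..n}. d i (x i) (y i) < \<epsilon>) \<Longrightarrow> dmax n d x y < \<epsilon>"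
  unfolding dmax_def by simp

theorem theorem3p7:
  fixes star :: "real \<Rightarrow> real \<Rightarrow> real"
    and n :: nat
    and X :: "nat \<Rightarrow> 'a set"
    and d :: "nat \<Rightarrow> 'a \<Rightarrow> 'a \<Rightarrow> real"
  assumes "t_definer star"
    and "n \<ge> 1"
    and "\<And>i. i \<in> {1..n} \<Longrightarrow> X i \<noteq> {}"
    and "\<And>i. i \<in> {1..n} \<Longrightarrow> star_metric star (X i) (d i)"
  shows "(star_totally_bounded (PiE {1..n} X) (dT star n d)
            \<longleftrightarrow> (\<forall>i\<in>{1..n}. star_totally_bounded (X i) (d i)))
       \<and> (star_totally_bounded (PiE {1..n} X) (dmax n d)
            \<longleftrightarrow> (\<forall>i\<in>{1..n}. star_totally_bounded (X i) (d i)))"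
proof (intro conjI star_totally_bounded_PiE_iff finite_atLeastAtMost assms(3))
  have nonneg: "d i (x i) (y i) \<ge> 0"
    if "x \<in> PiE {1..n} X" "y \<in> PiE {1..n} X" "i \<in> {1..n}" for x y i
    using star_metric_nonneg[OF assms(4)[OF that(3)] PiE_mem[OF that(1,3)] PiE_mem[OF that(2,3)]] .
  show "d i (x i) (y i) \<le> dT star n d x y"
    if "x \<in> PiE {1..n} X" "y \<in> PiE {1..n} X" "i \<in> {1..n}" for x y i
    using assms(1) nonneg[OF that(1,2)] that(3) by (rule dT_ge_component)
  show "\<exists>\<delta>>0. \<forall>x\<in>PiE {1..n} X. \<forall>y\<in>PiE {1..n} X.
          (\<forall>i\<in>{1..n}. d i (x i) (y i) < \<delta>) \<longrightarrow> dT star n d x y < \<epsilon>" if \<epsilon>: "\<epsilon> > 0" for \<epsilon>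
  proof -
    obtain \<delta> where "\<delta> > 0" and \<delta>:
      "\<And>x y. \<forall>i\<in>{1..n}. 0 \<le> d i (x i) (y i) \<and> d i (x i) (y i) < \<delta> \<Longrightarrow> dT star n d x y < \<epsilon>"
      using dT_small[OF assms(1) \<epsilon>] by blast
    have "dT star n d x y < \<epsilon>"
      if "x \<in> PiE {1..n} X" "y \<in> PiE {1..n} X" "\<forall>i\<in>{1..n}. d i (x i) (y i) < \<delta>" for x y
      by (rule \<delta>) (use nonneg[OF that(1,2)] that(3) in simp)
    with \<open>\<delta> > 0\<close> show ?thesis
      by blast
  qed
  show "d i (x i) (y i) \<le> dmax n d x y" if "i \<in> {1..n}" for x y i
    using dmax_ge_component[OF that] .
  show "\<exists>\<delta>>0. \<forall>x\<in>PiE {1..n} X. \<forall>y\<in>PiE {1..n} X.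
          (\<forall>i\<in>{1..n}. d i (x i) (y i) < \<delta>) \<longrightarrow> dmax n d x y < \<epsilon>" if "\<epsilon> > 0" for \<epsilon>
    using that by (intro exI[of _ \<epsilon>] conjI ballI impI dmax_less[OF assms(2)]) auto
qed

end
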